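(* Fix $\lambda \geqslant 0$ and let $g(\lambda) = (1-e^{-\lambda})/\lambda$ for $\lambda>0$, $g(0)=1$. For a compactly supported Borel probability measure $\rho$ on $\mathbb R$ with $\operatorname{supp}\rho \subset [0,+\infty)$ and $\langle \rho, x\rangle = \int x\,d\rho(x) \neq 0$, define the measure $$A(\rho) = \left(1 - g(\lambda) + g(\lambda)\frac{x}{\langle \rho, x\rangle}\right)\rho,$$ i.e. the measure with density $x \mapsto 1 - g(\lambda) + g(\lambda)x/\langle\rho,x\rangle$ with respect to $\rho$. Let $\rho_0$ be such a measure, let $\rho_t = A^t(\rho_0)$ for $t \in \mathbb N$, and let $\bar x_t = \langle \rho_t, x\rangle$. Then for every $t \in \mathbb N$, $\bar x_{t+1} - \bar x_t \geqslant 0$.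
   Context: Probability densities are identified with Borel probability measures (nonnegative Radon measures of total mass $1$) on $\mathbb R$; for a measure $\rho$ and a function $\phi$, $\langle \rho,\phi\rangle = \int \phi\,d\rho$. $\mathbb N$ includes $0$. *)

theory Defs
  imports "HOL-Probability.Probability"
begin

definition gfun :: "real \<Rightarrow> real" where
  "gfun l = (if l = 0 then 1 else (1 - exp (- l)) / l)"

definition mean :: "real measure \<Rightarrow> real" where
  "mean \<rho> = (\<integral>x. x \<partial>\<rho>)"

definition Aop :: "real \<Rightarrow> real measure \<Rightarrow> real measure" where
  "Aop l \<rho> = density \<rho> (\<lambda>x. ennreal (1 - gfun l + gfun l * x / mean \<rho>))"

end

theory Submission
  imports Defs
begin

text \<open>With \<open>m\<close> the mean of \<open>\<rho>\<close> and \<open>g = g(\<lambda>) \<ge> 0\<close>, the mean of \<open>A(\<rho>)\<close> is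
  \<open>(1 - g) m + g \<langle>\<rho>, x\<^sup>2\<rangle> / m\<close>, and \<open>\<langle>\<rho>, x\<^sup>2\<rangle> \<ge> m\<^sup>2\<close> because the variance is nonnegative.
  For this to apply at every step one propagates along the orbit the invariant that \<open>\<rho>\<^sub>t\<close> is a
  probability measure with positive mean concentrated on the fixed compact set \<open>K \<subseteq> [0, \<infinity>)\<close>
  carrying \<open>\<rho>\<^sub>0\<close>: the weight \<open>1 - g + g x / m\<close> is nonnegative there since \<open>g \<le> 1\<close>, it has
  integral \<open>1\<close>, and it does not move mass off \<open>K\<close>.\<close>

lemma gfun_nonneg: "0 \<le> l \<Longrightarrow> 0 \<le> gfun l"
  by (auto simp: gfun_def)

lemma gfun_le_one: "0 \<le> l \<Longrightarrow> gfun l \<le> 1"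
  using exp_ge_add_one_self[of "- l"] by (auto simp: gfun_def divide_le_eq)

lemma affine_weight_nonneg:
  fixes g m x :: real
  assumes "0 \<le> g" "g \<le> 1" "0 < m" "0 \<le> x"
  shows "0 \<le> 1 - g + g * x / m"
  using assms by (simp add: add_nonneg_nonneg)

lemma integrable_power_of_bounded_support:
  fixes M :: "real measure"
  assumes "finite_measure M" and [measurable_cong]: "sets M = sets borel"
    and "bounded K" "AE x in M. x \<in> K"
  shows "integrable M (\<lambda>x. x ^ n)"
proof -
  obtain B where B: "\<And>x. x \<in> K \<Longrightarrow> \<bar>x\<bar> \<le> B"
    using \<open>bounded K\<close> unfolding bounded_iff by auto
  show ?thesis
  proof (rule finite_measure.integrable_const_bound[OF \<open>finite_measure M\<close>, where B = "B ^ n"])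
    show "AE x in M. norm (x ^ n) \<le> B ^ n"
      using \<open>AE x in M. x \<in> K\<close> by eventually_elim (simp add: power_abs power_mono B)
  qed simp
qed

lemma (in prob_space) square_expectation_le:
  fixes X :: "'a \<Rightarrow> real"
  assumes "integrable M X" "integrable M (\<lambda>x. (X x)\<^sup>2)"
  shows "(expectation X)\<^sup>2 \<le> expectation (\<lambda>x. (X x)\<^sup>2)"
proof -
  have "0 \<le> variance X"
    by (rule integral_nonneg_AE) auto
  with variance_eq[OF assms] show ?thesis
    by simp
qed

lemma (in prob_space) prob_space_density_integral_one:
  assumes "integrable M f" "AE x in M. 0 \<le> f x" "expectation f = 1"
  shows "prob_space (density M (\<lambda>x. ennreal (f x)))"
proof (rule prob_spaceI)
  have "emeasure (density M (\<lambda>x. ennreal (f x))) (space M) = (\<integral>\<^sup>+ x. ennreal (f x) \<partial>M)"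
    using assms(1) by (subst emeasure_density) (auto intro!: nn_integral_cong)
  also have "\<dots> = 1"
    using nn_integral_eq_integral[OF assms(1,2)] assms(3) by simp
  finally show "emeasure (density M (\<lambda>x. ennreal (f x))) (space (density M (\<lambda>x. ennreal (f x)))) = 1"
    by simp
qed

lemma (in prob_space) expectation_le_reweighted:
  fixes X :: "'a \<Rightarrow> real" and c :: real
  assumes X: "integrable M X" "integrable M (\<lambda>x. (X x)\<^sup>2)"
    and "0 \<le> c" and m: "0 < expectation X"
  shows "expectation X \<le> expectation (\<lambda>x. (1 - c + c * X x / expectation X) * X x)"
proof -
  define m where "m = expectation X"
  have "expectation (\<lambda>x. (1 - c + c * X x / m) * X x)
      = expectation (\<lambda>x. (1 - c) * X x + (c / m) * (X x)\<^sup>2)"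
    by (simp add: algebra_simps power2_eq_square)
  also have "\<dots> = (1 - c) * m + (c / m) * expectation (\<lambda>x. (X x)\<^sup>2)"
    using X by (simp add: m_def)
  also have "\<dots> \<ge> (1 - c) * m + (c / m) * m\<^sup>2"
    using square_expectation_le[OF X] \<open>0 \<le> c\<close> m
    by (intro add_left_mono mult_left_mono) (simp_all add: m_def)
  finally show ?thesis
    using m by (simp add: m_def power2_eq_square algebra_simps)
qed

definition admissible :: "real set \<Rightarrow> real measure \<Rightarrow> bool" where
  "admissible K \<rho> \<longleftrightarrow>
     prob_space \<rho> \<and> sets \<rho> = sets borel \<and> (AE x in \<rho>. x \<in> K) \<and> 0 < mean \<rho>"

lemma admissible_Aop:
  assumes "0 \<le> l" "bounded K" "K \<subseteq> {0..}" "admissible K \<rho>"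
  shows "admissible K (Aop l \<rho>) \<and> mean \<rho> \<le> mean (Aop l \<rho>)"
proof -
  interpret prob_space \<rho>
    using \<open>admissible K \<rho>\<close> by (simp add: admissible_def)
  have sets[measurable_cong]: "sets \<rho> = sets borel" and K: "AE x in \<rho>. x \<in> K"
    and m: "0 < mean \<rho>"
    using \<open>admissible K \<rho>\<close> by (auto simp: admissible_def)
  define f where "f x = 1 - gfun l + gfun l * x / mean \<rho>" for x
  have X: "integrable \<rho> (\<lambda>x. x)" "integrable \<rho> (\<lambda>x. x\<^sup>2)"
    using integrable_power_of_bounded_support[OF finite_measure_axioms sets \<open>bounded K\<close> K, of 1]
      integrable_power_of_bounded_support[OF finite_measure_axioms sets \<open>bounded K\<close> K, of 2] by simp_all
  have [measurable]: "f \<in> borel_measurable \<rho>"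
    unfolding f_def by simp
  have f_nonneg: "AE x in \<rho>. 0 \<le> f x"
    using K
  proof eventually_elim
    case (elim x)
    then show ?case
      using \<open>K \<subseteq> {0..}\<close> m gfun_nonneg[OF \<open>0 \<le> l\<close>] gfun_le_one[OF \<open>0 \<le> l\<close>]
      unfolding f_def by (intro affine_weight_nonneg) auto
  qed
  have A: "Aop l \<rho> = density \<rho> (\<lambda>x. ennreal (f x))"
    by (simp add: Aop_def f_def)
  have "prob_space (Aop l \<rho>)"
    unfolding A
  proof (rule prob_space_density_integral_one[OF _ f_nonneg])
    show "integrable \<rho> f"
      using X unfolding f_def by auto
    show "expectation f = 1"
      using X m unfolding f_def by (simp add: prob_space mean_def)
  qed
  moreover have "AE x in Aop l \<rho>. x \<in> K"
    unfolding A by (subst AE_density) (auto intro: AE_mp[OF K])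
  moreover have "mean (Aop l \<rho>) = expectation (\<lambda>x. f x * x)"
    unfolding A mean_def by (subst integral_density) (auto simp: f_nonneg)
  moreover have "mean \<rho> \<le> expectation (\<lambda>x. f x * x)"
    using expectation_le_reweighted[OF X gfun_nonneg[OF \<open>0 \<le> l\<close>]] m
    by (simp add: f_def mean_def)
  moreover have "sets (Aop l \<rho>) = sets borel"
    by (simp add: A sets)
  ultimately show ?thesis
    using m by (simp add: admissible_def)
qed

lemma admissible_iterate_Aop:
  assumes "0 \<le> l" "bounded K" "K \<subseteq> {0..}" "admissible K \<rho>"
  shows "admissible K ((Aop l ^^ n) \<rho>)"
  by (induction n) (use assms admissible_Aop in auto)

lemma admissible_initial:
  fixes K :: "real set"
  assumes "prob_space \<rho>" "sets \<rho> = sets borel" "closed K" "K \<subseteq> {0..}"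
    and "emeasure \<rho> (UNIV - K) = 0" "mean \<rho> \<noteq> 0"
  shows "admissible K \<rho>"
proof -
  have "space \<rho> = UNIV"
    using sets_eq_imp_space_eq[OF assms(2)] by simp
  then have K: "AE x in \<rho>. x \<in> K"
    using assms(2,3,5) by (intro AE_I[where N = "UNIV - K"]) auto
  have "0 \<le> mean \<rho>"
    unfolding mean_def using K \<open>K \<subseteq> {0..}\<close> by (intro integral_nonneg_AE) auto
  with assms K show ?thesis
    by (simp add: admissible_def)
qed

theorem mainTheorem1:
  fixes l :: real and \<rho>0 :: "real measure" and t :: nat
  assumes "l \<ge> 0"
    and "prob_space \<rho>0"
    and "sets \<rho>0 = sets borel"
    and "\<exists>K. compact K \<and> K \<subseteq> {0..} \<and> emeasure \<rho>0 (UNIV - K) = 0"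
    and "mean \<rho>0 \<noteq> 0"
  shows "mean ((Aop l ^^ Suc t) \<rho>0) - mean ((Aop l ^^ t) \<rho>0) \<ge> 0"
proof -
  obtain K where K: "compact K" "K \<subseteq> {0..}" "emeasure \<rho>0 (UNIV - K) = 0"
    using assms(4) by blast
  have "admissible K \<rho>0"
    using assms(2,3,5) K by (intro admissible_initial compact_imp_closed)
  then have "admissible K ((Aop l ^^ t) \<rho>0)"
    using assms(1) K(2) compact_imp_bounded[OF K(1)] by (intro admissible_iterate_Aop)
  then show ?thesis
    using admissible_Aop assms(1) K(2) compact_imp_bounded[OF K(1)] by simp
qed

end
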